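(* Let $n\ge 1$, let $u=(u_1,\dots,u_n)$ be a 021-avoiding ascent sequence and let $P=\Phi(u)$ be the Dyck path of size $n$ defined in the context. Then: (1) the number of initial 0s of $u$ equals the length of the first descent of $P$; (2) the number of terminal 0s of $u$ equals the length of the last ascent of $P$ minus 1, where for the all-zero sequence the number of terminal 0s is interpreted as $n-1$; (3) the number of ascents of $u$ equals the number of valleys (occurrences of $DU$) of $P$; (4) the number of descents of $u$ equals the number of occurrences of three consecutive steps $DUU$ in $P$; (5) if $u$ has a nonzero entry, the number of entries immediately preceding the last nonzero entry of $u$ and equal to it (i.e., the length of the maximal run of consecutive entries equal to the last nonzero entry that ends just before it) equals the degree of elevation of $P$.
   Context: An ascent in a sequence of integers is a pair of consecutive entries with the first smaller than the second; a descent is a pair of consecutive entries with the first larger than the second. An ascent sequence of length $n$ is a sequence $(u_1,\dots,u_n)$ of nonnegative integers with $u_1=0$ and $u_i\le 1+(\text{number of ascents in }(u_1,\dots,u_{i-1}))$ for $2\le i\le n$. It is 021-avoiding if its nonzero entries are weakly increasing. The number of initial 0s is the length of the maximal initial run of zeros; the number of terminal 0s is the length of the maximal final run of zeros. A Dyck path of size $n$ is a sequence of $n$ upsteps $U=(1,1)$ and $n$ downsteps $D=(1,-1)$ starting at height 0 and never going below height 0. An ascent (resp. descent) of a path is a maximal run of consecutive $U$'s (resp. $D$'s); the first descent is the leftmost one, the last ascent the rightmost one, and the terminal descent the final descent. A peak vertex is the vertex between a $U$ and the immediately following $D$; a valley vertex is the vertex between a $D$ and the immediately following $U$. The degree of elevation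 of a path having at least one valley is the minimum height of its valley vertices. For an upstep $U_0$, its matching downstep is the last step of the shortest Dyck subpath beginning with $U_0$; $U_0$ is its matching upstep. A key downstep is a downstep on the terminal descent whose matching upstep is the middle letter of an occurrence of $DUU$. Key downsteps are ordered from left to right. The map $\Phi$: given $(u_1,\dots,u_n)$, start with $P=UD$. For $i=2,\dots,n$, with $a$ and $m$ the number of ascents and the maximum entry of $(u_1,\dots,u_{i-1})$: Case 1: if $u_i=0$, replace the last $UD$ of $P$ by $UUDD$. Case 2: if $u_i\neq0$ and $u_i=u_{i-1}$, replace $P$ by $UPD$. Case 3: if $u_i\neq 0$, $u_i\ne u_{i-1}$ and $u_i=a+1$, replace $P$ by $PUD$. Case 4: otherwise, $u_i$ lies in $A_i=(m,\dots,a)$ if $u_{i-1}=0$, or $A_i=(m+1,\dots,a)$ if $u_{i-1}>0$; let $j$ be the position of $u_i$ in $A_i$, $e$ the degree of elevation of $P$, and $D_j$ the $j$-th key downstep of $P$. Insert $UD$ at the top vertex of $D_j$, then delete $e$ upsteps from the start of the path and insert $e$ upsteps into the ascent containing the matching upstep of $D_j$. $\Phi(u)$ is the final path. *)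

theory Defs
  imports Main
begin

section \<open>Sequences of integers (nat lists, 0-indexed)\<close>

definition asc_count :: "nat list \<Rightarrow> nat" where
  "asc_count xs = card {i. Suc i < length xs \<and> xs ! i < xs ! Suc i}"

definition desc_count :: "nat list \<Rightarrow> nat" where
  "desc_count xs = card {i. Suc i < length xs \<and> xs ! i > xs ! Suc i}"

definition ascent_seq :: "nat list \<Rightarrow> bool" where
  "ascent_seq u \<longleftrightarrow> u \<noteq> [] \<and> u ! 0 = 0 \<and>
     (\<forall>i. 1 \<le> i \<and> i < length u \<longrightarrow> u ! i \<le> 1 + asc_count (take i u))"

definition avoids_021 :: "nat list \<Rightarrow> bool" where
  "avoids_021 u \<longleftrightarrow> sorted (filter (\<lambda>x. x \<noteq> 0) u)"

definition initial_zeros :: "nat list \<Rightarrow> nat" where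
  "initial_zeros u = length (takeWhile (\<lambda>x. x = 0) u)"

definition terminal_zeros :: "nat list \<Rightarrow> nat" where
  "terminal_zeros u = length (takeWhile (\<lambda>x. x = 0) (rev u))"

definition last_nonzero_idx :: "nat list \<Rightarrow> nat" where
  "last_nonzero_idx u = (GREATEST i. i < length u \<and> u ! i \<noteq> 0)"

definition run_before_last_nonzero :: "nat list \<Rightarrow> nat" where
  "run_before_last_nonzero u =
     (let j = last_nonzero_idx u in length (takeWhile (\<lambda>x. x = u ! j) (rev (take j u))))"

type_synonym path = "bool list"

abbreviation U :: bool where "U \<equiv> True"
abbreviation D :: bool where "D \<equiv> False"

definition dyck_path :: "path \<Rightarrow> bool" where
  "dyck_path P \<longleftrightarrow> count_list P U = count_list P D \<and>
     (\<forall>k \<le> length P. count_list (take k P) D \<le> count_list (take k P) U)"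

text \<open>Height of vertex v (the vertex after the first v steps).\<close>
definition height :: "path \<Rightarrow> nat \<Rightarrow> int" where
  "height P v = int (count_list (take v P) U) - int (count_list (take v P) D)"

definition first_descent_len :: "path \<Rightarrow> nat" where
  "first_descent_len P = length (takeWhile (\<lambda>s. s = D) (dropWhile (\<lambda>s. s = U) P))"

definition last_ascent_len :: "path \<Rightarrow> nat" where
  "last_ascent_len P = length (takeWhile (\<lambda>s. s = U) (dropWhile (\<lambda>s. s = D) (rev P)))"

definition terminal_descent_len :: "path \<Rightarrow> nat" where
  "terminal_descent_len P = length (takeWhile (\<lambda>s. s = D) (rev P))"

definition valley_count :: "path \<Rightarrow> nat" where
  "valley_count P = card {i. Suc i < length P \<and> P ! i = D \<and> P ! Suc i = U}"

definition DUU_count :: "path \<Rightarrow> nat" where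
  "DUU_count P = card {i. i + 2 < length P \<and> P ! i = D \<and> P ! (i+1) = U \<and> P ! (i+2) = U}"

definition valley_vertex :: "path \<Rightarrow> nat \<Rightarrow> bool" where
  "valley_vertex P v \<longleftrightarrow> 0 < v \<and> v < length P \<and> P ! (v - 1) = D \<and> P ! v = U"

text \<open>Degree of elevation: minimum height of valley vertices (meaningful when a valley exists).\<close>
definition elevation :: "path \<Rightarrow> int" where
  "elevation P = Min (height P ` {v. valley_vertex P v})"

text \<open>Matching downstep of the upstep at index k: last step of the shortest
  Dyck subpath starting with step k, i.e. first return to the level of vertex k.\<close>
definition match_down :: "path \<Rightarrow> nat \<Rightarrow> nat" where
  "match_down P k = (LEAST l. k < l \<and> l < length P \<and> height P (Suc l) = height P k)"

definition match_up :: "path \<Rightarrow> nat \<Rightarrow> nat" where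
  "match_up P l = (THE k. k < length P \<and> P ! k = U \<and> match_down P k = l)"

definition key_down :: "path \<Rightarrow> nat \<Rightarrow> bool" where
  "key_down P l \<longleftrightarrow> l < length P \<and> length P - terminal_descent_len P \<le> l \<and>
     (\<exists>k. 0 < k \<and> Suc k < length P \<and> P ! k = U \<and> match_down P k = l \<and>
          P ! (k - 1) = D \<and> P ! Suc k = U)"

definition key_downs :: "path \<Rightarrow> nat list" where
  "key_downs P = filter (key_down P) [0..<length P]"

definition last_UD :: "path \<Rightarrow> nat" where
  "last_UD P = (GREATEST k. Suc k < length P \<and> P ! k = U \<and> P ! Suc k = D)"

text \<open>Step for the (0-indexed) entry i >= 1 of u (i.e. the paper's u_{i+1}).\<close>
definition phi_step :: "nat list \<Rightarrow> nat \<Rightarrow> path \<Rightarrow> path" where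
  "phi_step u i P =
    (let x = u ! i; prev = u ! (i - 1); pre = take i u;
         a = asc_count pre; m = Max (set pre) in
     if x = 0 then
       (let k = last_UD P in take k P @ [U, U, D, D] @ drop (Suc (Suc k)) P)
     else if x = prev then U # P @ [D]
     else if x = a + 1 then P @ [U, D]
     else
       (let Ai = (if prev = 0 then [m..<Suc a] else [Suc m..<Suc a]);
            j = (THE j. j < length Ai \<and> Ai ! j = x);
            e = nat (elevation P);
            l = key_downs P ! j;
            k = match_up P l;
            Q = take l P @ [U, D] @ drop l P;
            R = drop e Q
        in take (k - e) R @ replicate e U @ drop (k - e) R))"

text \<open>Here j is the 0-based position, so key_downs P ! j is the paper's D_{j+1}
  with j+1 the 1-based position. The e upsteps are inserted immediately before
  the (shifted) matching upstep, i.e. into the ascent containing it.\<close>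

definition Phi :: "nat list \<Rightarrow> path" where
  "Phi u = foldl (\<lambda>P i. phi_step u i P) [U, D] [1..<length u]"

end

theory Submission
  imports Defs
begin

text \<open>Every path \<open>\<Phi>(u)\<close> has the shape \<open>A\<^sub>1 U A\<^sub>2 U \<dots> A\<^sub>k U D\<^sup>k\<close> with Dyck paths \<open>A\<^sub>i\<close>.
  The statistics of such a path are read off the component list \<open>(A\<^sub>1, \<dots>, A\<^sub>k)\<close>:
  the first descent is that of the first nonempty component, the last ascent counts the
  trailing empty components, valleys and \<open>DUU\<close>s add up over the components plus one per
  nonempty component, the degree of elevation is the number of leading empty components, and
  the key downsteps are the final \<open>D\<close>s matched with the nonempty components other than
  \<open>A\<^sub>k\<close>. Each case of \<open>\<Phi>\<close> transforms the component list in a simple way (append an empty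
  component, prepend one, wrap everything into a single component, or split the list at the
  component selected by the key downstep), and an induction along \<open>u\<close> shows that the
  statistics of \<open>u\<close> and of its component list stay linked. The avoidance of 021 is what
  makes the case-4 value \<open>u\<^sub>i\<close> determine the key downstep: the number of nonempty inner
  components is \<open>asc(u) - max(u)\<close>, up to the correction for a final zero.\<close>

lemma count_list_replicate [simp]: "count_list (replicate n x) y = (if x = y then n else 0)"
  by (induction n) auto

lemma takeWhile_append_stop: "\<not> P y \<Longrightarrow> takeWhile P (xs @ y # ys) = takeWhile P xs"
  by (induction xs) auto

lemma card_less_Suc_if:
  "card {i. i < Suc n \<and> p i} = (if p 0 then 1 else 0) + card {i. i < n \<and> p (Suc i)}"
proof -
  have split: "{i. i < Suc n \<and> p i} = (if p 0 then {0} else {}) \<union> Suc ` {i. i < n \<and> p (Suc i)}"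
    by (auto simp: less_Suc_eq_0_disj)
  have "card ((if p 0 then {0} else {}) \<union> Suc ` {i. i < n \<and> p (Suc i)}) =
        card (if p 0 then {0::nat} else {}) + card (Suc ` {i. i < n \<and> p (Suc i)})"
    by (rule card_Un_disjoint) auto
  also have "card (Suc ` {i. i < n \<and> p (Suc i)}) = card {i. i < n \<and> p (Suc i)}"
    by (rule card_image) auto
  finally show ?thesis using split by simp
qed

lemma length_filter_drop:
  "length (filter p (drop k xs)) = card {i. k \<le> i \<and> i < length xs \<and> p (xs ! i)}"
proof -
  let ?S = "{i. i < length xs - k \<and> p (xs ! (k + i))}"
  have "length (filter p (drop k xs)) = card ?S"
    unfolding length_filter_conv_card by (rule arg_cong[where f=card]) auto
  also have "\<dots> = card ((+) k ` ?S)"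
    by (rule card_image[symmetric]) simp
  also have "(+) k ` ?S = {i. k \<le> i \<and> i < length xs \<and> p (xs ! i)}"
  proof (intro set_eqI iffI)
    fix y assume "y \<in> {i. k \<le> i \<and> i < length xs \<and> p (xs ! i)}"
    then show "y \<in> (+) k ` ?S" by (intro image_eqI[of _ _ "y - k"]) auto
  qed auto
  finally show ?thesis .
qed

lemma nth_filter_upt:
  "j < length (filter p [0..<N]) \<Longrightarrow>
   p (filter p [0..<N] ! j) \<and> filter p [0..<N] ! j < N \<and> length (filter p [0..<filter p [0..<N] ! j]) = j"
proof (induction N)
  case (Suc N)
  show ?case
  proof (cases "j < length (filter p [0..<N])")
    case True
    then show ?thesis using Suc.IH by (simp add: nth_append)
  next
    case False
    then have "p N" "j = length (filter p [0..<N])" using Suc.prems by (auto split: if_splits)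
    then show ?thesis by (simp add: nth_append)
  qed
qed simp

lemma length_filter_upt: "length (filter p [0..<N]) = card {x. x < N \<and> p x}"
  unfolding length_filter_conv_card by (rule arg_cong[where f=card]) auto

lemma The_nth_upt:
  "a \<le> x \<Longrightarrow> x < b \<Longrightarrow> (THE j. j < length [a..<b] \<and> [a..<b] ! j = x) = x - a"
  by (intro the_equality) auto

fun adj_count :: "('a \<Rightarrow> 'a \<Rightarrow> bool) \<Rightarrow> 'a list \<Rightarrow> nat" where
  "adj_count R (x # y # xs) = (if R x y then 1 else 0) + adj_count R (y # xs)"
| "adj_count R _ = 0"

fun adj3_count :: "('a \<Rightarrow> 'a \<Rightarrow> 'a \<Rightarrow> bool) \<Rightarrow> 'a list \<Rightarrow> nat" where
  "adj3_count R (x # y # z # xs) = (if R x y z then 1 else 0) + adj3_count R (y # z # xs)"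
| "adj3_count R _ = 0"

abbreviation is_DU :: "bool \<Rightarrow> bool \<Rightarrow> bool" where
  "is_DU \<equiv> \<lambda>a b. \<not> a \<and> b"

abbreviation is_DUU :: "bool \<Rightarrow> bool \<Rightarrow> bool \<Rightarrow> bool" where
  "is_DUU \<equiv> \<lambda>a b c. \<not> a \<and> b \<and> c"

lemma card_adjacent_eq_adj_count:
  "card {i. Suc i < length xs \<and> R (xs ! i) (xs ! Suc i)} = adj_count R xs"
proof (induction R xs rule: adj_count.induct)
  case (1 R x y xs)
  let ?xs = "x # y # xs" and ?ys = "y # xs"
  have "card {i. Suc i < length ?xs \<and> R (?xs ! i) (?xs ! Suc i)}
     = card {i. i < Suc (length xs) \<and> R (?xs ! i) (?xs ! Suc i)}"
    by simp
  also have "\<dots> = (if R x y then 1 else 0) + card {i. i < length xs \<and> R (?ys ! i) (?ys ! Suc i)}"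
    by (subst card_less_Suc_if) simp
  finally show ?case using 1 by simp
qed simp_all

lemma card_adjacent3_eq_adj3_count:
  "card {i. i + 2 < length xs \<and> R (xs ! i) (xs ! (i + 1)) (xs ! (i + 2))} = adj3_count R xs"
proof (induction R xs rule: adj3_count.induct)
  case (1 R x y z xs)
  let ?xs = "x # y # z # xs" and ?ys = "y # z # xs"
  have "card {i. i + 2 < length ?xs \<and> R (?xs ! i) (?xs ! (i + 1)) (?xs ! (i + 2))}
     = card {i. i < Suc (length xs) \<and> R (?xs ! i) (?xs ! Suc i) (?xs ! Suc (Suc i))}"
    by (simp add: numeral_2_eq_2)
  also have "\<dots> = (if R x y z then 1 else 0)
      + card {i. i < length xs \<and> R (?ys ! i) (?ys ! Suc i) (?ys ! Suc (Suc i))}"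
    by (subst card_less_Suc_if) simp
  finally show ?case using 1 by (simp add: numeral_2_eq_2)
qed auto

lemma asc_count_eq_adj_count: "asc_count xs = adj_count (<) xs"
  unfolding asc_count_def by (rule card_adjacent_eq_adj_count)

lemma desc_count_eq_adj_count: "desc_count xs = adj_count (>) xs"
  unfolding desc_count_def by (rule card_adjacent_eq_adj_count)

lemma valley_count_eq_adj_count: "valley_count P = adj_count is_DU P"
  unfolding valley_count_def by (subst card_adjacent_eq_adj_count[symmetric]) simp

lemma DUU_count_eq_adj3_count: "DUU_count P = adj3_count is_DUU P"
  unfolding DUU_count_def by (subst card_adjacent3_eq_adj3_count[symmetric]) simp

lemma adj_count_snoc:
  "adj_count R (xs @ [x]) = adj_count R xs + (if xs \<noteq> [] \<and> R (last xs) x then 1 else 0)"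
  by (induction R xs rule: adj_count.induct) auto

lemma adj_count_Cons:
  "adj_count R (x # ys) = adj_count R ys + (if ys \<noteq> [] \<and> R x (hd ys) then 1 else 0)"
  by (cases ys) auto

lemma adj_count_append:
  "adj_count R (xs @ ys) = adj_count R xs + adj_count R ys
     + (if xs \<noteq> [] \<and> ys \<noteq> [] \<and> R (last xs) (hd ys) then 1 else 0)"
  by (induction xs) (auto simp: adj_count_Cons)

lemma adj3_count_Cons:
  "adj3_count R (x # xs) = adj3_count R xs + (if 2 \<le> length xs \<and> R x (xs ! 0) (xs ! 1) then 1 else 0)"
  by (cases xs; cases "tl xs") auto

definition final_height :: "path \<Rightarrow> int" where
  "final_height P = height P (length P)"

definition nonneg_heights :: "path \<Rightarrow> bool" where
  "nonneg_heights P \<longleftrightarrow> (\<forall>v \<le> length P. 0 \<le> height P v)"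

abbreviation dyck_paths :: "path list \<Rightarrow> bool" where
  "dyck_paths As \<equiv> \<forall>A\<in>set As. dyck_path A"

lemma height_0 [simp]: "height P 0 = 0"
  by (simp add: height_def)

lemma height_Suc: "v < length P \<Longrightarrow> height P (Suc v) = height P v + (if P ! v then 1 else -1)"
  by (simp add: height_def take_Suc_conv_app_nth)

lemma height_append_le: "v \<le> length xs \<Longrightarrow> height (xs @ ys) v = height xs v"
  by (simp add: height_def)

lemma height_append_length_plus: "height (xs @ ys) (length xs + v) = final_height xs + height ys v"
  by (simp add: height_def final_height_def)

lemma height_append_ge:
  "length xs \<le> v \<Longrightarrow> height (xs @ ys) v = final_height xs + height ys (v - length xs)"
  using height_append_length_plus[of xs ys "v - length xs"] by simp

lemma height_replicate: "height (replicate t b) v = (if b then int (min v t) else - int (min v t))"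
  by (simp add: height_def)

lemma final_height_append [simp]: "final_height (xs @ ys) = final_height xs + final_height ys"
  by (simp add: final_height_def height_def)

lemma final_height_Nil [simp]: "final_height [] = 0"
  by (simp add: final_height_def)

lemma final_height_Cons [simp]: "final_height (x # xs) = (if x then 1 else -1) + final_height xs"
  by (simp add: final_height_def height_def)

lemma final_height_replicate [simp]: "final_height (replicate t b) = (if b then int t else - int t)"
  by (induction t) auto

lemma dyck_path_iff: "dyck_path P \<longleftrightarrow> final_height P = 0 \<and> nonneg_heights P"
  by (simp add: dyck_path_def final_height_def nonneg_heights_def height_def)

lemma dyck_path_Nil [simp]: "dyck_path []"
  by (simp add: dyck_path_iff nonneg_heights_def)

lemma nonneg_heights_append:
  assumes "nonneg_heights xs" "nonneg_heights ys" "0 \<le> final_height xs"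
  shows "nonneg_heights (xs @ ys)"
  unfolding nonneg_heights_def
proof (intro allI impI)
  fix v assume v: "v \<le> length (xs @ ys)"
  show "0 \<le> height (xs @ ys) v"
  proof (cases "v \<le> length xs")
    case True then show ?thesis using assms by (simp add: nonneg_heights_def height_append_le)
  next
    case False then show ?thesis using assms v by (simp add: nonneg_heights_def height_append_ge)
  qed
qed

lemma dyck_path_hd: "dyck_path A \<Longrightarrow> A \<noteq> [] \<Longrightarrow> hd A = U"
proof -
  assume d: "dyck_path A" and ne: "A \<noteq> []"
  then obtain x xs where A: "A = x # xs" by (cases A) auto
  have "0 \<le> height A 1" using d ne by (auto simp: dyck_path_iff nonneg_heights_def A)
  then show ?thesis using A by (auto simp: height_def split: if_splits)
qed

lemma dyck_path_last: "dyck_path A \<Longrightarrow> A \<noteq> [] \<Longrightarrow> last A = D"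
proof -
  assume d: "dyck_path A" and ne: "A \<noteq> []"
  then obtain xs x where A: "A = xs @ [x]" by (cases A rule: rev_cases) auto
  have "0 \<le> height A (length xs)" using d by (auto simp: dyck_path_iff nonneg_heights_def A)
  moreover have "height A (length xs) = final_height xs" using A by (simp add: height_append_le final_height_def)
  moreover have "final_height A = 0" using d by (simp add: dyck_path_iff)
  ultimately show ?thesis using A by (auto split: if_splits)
qed

lemma height_intermediate_value:
  assumes "a \<le> b" "b \<le> length P" "c \<le> height P a" "height P b \<le> c"
  shows "\<exists>v. a \<le> v \<and> v \<le> b \<and> height P v = c"
  using assms
proof (induction b)
  case (Suc b)
  have step: "height P (Suc b) = height P b + (if P ! b then 1 else -1)"
    using Suc.prems by (intro height_Suc) auto
  show ?case
  proof (cases "a = Suc b")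
    case False
    then have ab: "a \<le> b" using Suc.prems by auto
    show ?thesis
    proof (cases "height P b \<le> c")
      case True
      then show ?thesis using Suc.IH[OF ab _ Suc.prems(3)] Suc.prems by fastforce
    next
      case False
      then have "height P (Suc b) = c" using step Suc.prems by (auto split: if_splits)
      then show ?thesis using ab by (intro exI[of _ "Suc b"]) auto
    qed
  qed (use Suc.prems in auto)
qed auto

lemma match_down_first_return:
  assumes dP: "dyck_path P" and k: "k < length P" "P ! k"
  shows "k < match_down P k \<and> match_down P k < length P
      \<and> height P (Suc (match_down P k)) = height P k"
    and "k < y \<Longrightarrow> y < match_down P k \<Longrightarrow> height P (Suc y) \<noteq> height P k"
proof -
  have up: "height P (Suc k) = height P k + 1" using k height_Suc[of k P] by simp
  have "0 \<le> height P k" using dP k by (simp add: dyck_path_iff nonneg_heights_def)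
  moreover have "height P (length P) = 0" using dP by (simp add: dyck_path_iff final_height_def)
  ultimately obtain v where v: "Suc k \<le> v" "v \<le> length P" "height P v = height P k"
    using height_intermediate_value[of "Suc k" "length P" P "height P k"] up k by auto
  have "v \<noteq> Suc k" using v up by auto
  then have ex: "k < v - 1 \<and> v - 1 < length P \<and> height P (Suc (v - 1)) = height P k"
    using v by auto
  show first: "k < match_down P k \<and> match_down P k < length P \<and> height P (Suc (match_down P k)) = height P k"
    unfolding match_down_def by (rule LeastI[of _ "v - 1"]) (rule ex)
  show "k < y \<Longrightarrow> y < match_down P k \<Longrightarrow> height P (Suc y) \<noteq> height P k"
    using not_less_Least[of y "\<lambda>l. k < l \<and> l < length P \<and> height P (Suc l) = height P k"] first
    by (auto simp: match_down_def)
qed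

section \<open>Mountains\<close>

text \<open>The component list \<open>[A\<^sub>1, \<dots>, A\<^sub>k]\<close> stands for the path \<open>A\<^sub>1 U \<dots> A\<^sub>k U D\<^sup>k\<close>; the
  \<open>U\<close> following \<open>A\<^sub>i\<close> is matched by the \<open>i\<close>-th \<open>D\<close> from the end.\<close>

definition climb :: "path list \<Rightarrow> path" where
  "climb As = concat (map (\<lambda>A. A @ [U]) As)"

definition mountain :: "path list \<Rightarrow> path" where
  "mountain As = climb As @ replicate (length As) D"

lemma climb_Nil [simp]: "climb [] = []"
  by (simp add: climb_def)

lemma climb_Cons [simp]: "climb (A # As) = A @ U # climb As"
  by (simp add: climb_def)

lemma climb_append [simp]: "climb (As @ Bs) = climb As @ climb Bs"
  by (simp add: climb_def)

lemma climb_replicate_Nil [simp]: "climb (replicate e []) = replicate e U"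
  by (induction e) auto

lemma length_mountain: "length (mountain As) = length (climb As) + length As"
  by (simp add: mountain_def)

lemma climb_heights:
  "dyck_paths As \<Longrightarrow> final_height (climb As) = int (length As) \<and> nonneg_heights (climb As)"
proof (induction As)
  case Nil then show ?case by (simp add: nonneg_heights_def)
next
  case (Cons A As)
  then have A: "final_height A = 0" "nonneg_heights A"
    and IH: "final_height (climb As) = int (length As)" "nonneg_heights (climb As)"
    by (auto simp: dyck_path_iff)
  have "nonneg_heights [U]" by (auto simp: nonneg_heights_def height_def le_Suc_eq)
  then have "nonneg_heights ([U] @ climb As)"
    using IH by (intro nonneg_heights_append) auto
  then have "nonneg_heights (A @ [U] @ climb As)"
    by (intro nonneg_heights_append[OF A(2)]) (simp_all add: A)
  then show ?case using A IH by simp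
qed

lemma final_height_climb: "dyck_paths As \<Longrightarrow> final_height (climb As) = int (length As)"
  using climb_heights by blast

lemma height_climb_nonneg:
  "dyck_paths As \<Longrightarrow> v \<le> length (climb As) \<Longrightarrow> 0 \<le> height (climb As) v"
  using climb_heights unfolding nonneg_heights_def by blast

lemma height_mountain_descent:
  "dyck_paths As \<Longrightarrow> t \<le> length As \<Longrightarrow>
   height (mountain As) (length (climb As) + t) = int (length As) - int t"
  using final_height_climb by (simp add: mountain_def height_append_length_plus height_replicate)

lemma dyck_path_mountain:
  assumes d: "dyck_paths As"
  shows "dyck_path (mountain As)"
proof -
  have "nonneg_heights (mountain As)" unfolding nonneg_heights_def
  proof (intro allI impI)
    fix v assume v: "v \<le> length (mountain As)"
    show "0 \<le> height (mountain As) v"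
    proof (cases "v \<le> length (climb As)")
      case True then show ?thesis
        using height_climb_nonneg[OF d True] by (simp add: mountain_def height_append_le)
    next
      case False then show ?thesis
        using v final_height_climb[OF d] by (simp add: mountain_def height_append_ge height_replicate)
    qed
  qed
  then show ?thesis using final_height_climb[OF d] by (simp add: dyck_path_iff mountain_def)
qed

lemma mountain_nth_descent:
  "length (climb As) \<le> v \<Longrightarrow> v < length (mountain As) \<Longrightarrow> mountain As ! v = D"
  by (simp add: mountain_def nth_append)

lemma climb_snoc_U: "As \<noteq> [] \<Longrightarrow> \<exists>Z. climb As = Z @ [U]"
  by (induction As rule: rev_induct) auto

lemma climb_hd: "dyck_paths As \<Longrightarrow> As \<noteq> [] \<Longrightarrow> climb As \<noteq> [] \<and> hd (climb As) = U"
  by (cases As) (auto simp: dyck_path_hd hd_append)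

definition valley_sum :: "path list \<Rightarrow> nat" where
  "valley_sum As = (\<Sum>A\<leftarrow>As. adj_count is_DU A + (if A = [] then 0 else 1))"

definition DUU_sum :: "path list \<Rightarrow> nat" where
  "DUU_sum As = (\<Sum>A\<leftarrow>As. adj3_count is_DUU A)"

text \<open>The nonempty components other than the last one correspond to the key downsteps.\<close>

definition inner_idx :: "path list \<Rightarrow> nat set" where
  "inner_idx As = {i. i < length As - 1 \<and> As ! i \<noteq> []}"

definition inner_count :: "path list \<Rightarrow> nat" where
  "inner_count As = length (filter (\<lambda>A. A \<noteq> []) (butlast As))"

fun first_inner_descent :: "path list \<Rightarrow> nat" where
  "first_inner_descent [] = 0"
| "first_inner_descent (A # As) = (if A = [] then first_inner_descent As else first_descent_len A)"

definition leading_flat :: "path list \<Rightarrow> nat" where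
  "leading_flat As = length (takeWhile (\<lambda>A. A = []) As)"

definition trailing_flat :: "path list \<Rightarrow> nat" where
  "trailing_flat As = length (takeWhile (\<lambda>A. A = []) (rev As))"

lemma valley_sum_Nil [simp]: "valley_sum [] = 0"
  by (simp add: valley_sum_def)

lemma valley_sum_Cons [simp]:
  "valley_sum (A # As) = adj_count is_DU A + (if A = [] then 0 else 1) + valley_sum As"
  by (simp add: valley_sum_def)

lemma valley_sum_append [simp]: "valley_sum (As @ Bs) = valley_sum As + valley_sum Bs"
  by (simp add: valley_sum_def)

lemma valley_sum_replicate_Nil [simp]: "valley_sum (replicate e []) = 0"
  by (induction e) auto

lemma DUU_sum_Nil [simp]: "DUU_sum [] = 0"
  by (simp add: DUU_sum_def)

lemma DUU_sum_Cons [simp]: "DUU_sum (A # As) = adj3_count is_DUU A + DUU_sum As"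
  by (simp add: DUU_sum_def)

lemma DUU_sum_append [simp]: "DUU_sum (As @ Bs) = DUU_sum As + DUU_sum Bs"
  by (simp add: DUU_sum_def)

lemma DUU_sum_replicate_Nil [simp]: "DUU_sum (replicate e []) = 0"
  by (induction e) auto

lemma inner_count_snoc:
  "As \<noteq> [] \<Longrightarrow> inner_count (As @ [B]) = inner_count As + (if last As \<noteq> [] then 1 else 0)"
  by (cases As rule: rev_cases) (auto simp: inner_count_def butlast_append)

lemma inner_count_Cons_Nil: "As \<noteq> [] \<Longrightarrow> inner_count ([] # As) = inner_count As"
  by (simp add: inner_count_def)

lemma inner_count_single: "inner_count [B] = 0"
  by (simp add: inner_count_def)

lemma inner_idx_butlast: "inner_idx As = {i. i < length (butlast As) \<and> butlast As ! i \<noteq> []}"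
  by (auto simp: inner_idx_def nth_butlast)

lemma inner_count_eq_card: "inner_count As = card (inner_idx As)"
  unfolding inner_count_def inner_idx_butlast length_filter_conv_card by simp

lemma inner_count_drop:
  "inner_count (drop (Suc i) As) = card {i'\<in>inner_idx As. i < i'}"
proof -
  have "inner_count (drop (Suc i) As) = length (filter (\<lambda>A. A \<noteq> []) (drop (Suc i) (butlast As)))"
    by (simp add: inner_count_def butlast_drop)
  also have "\<dots> = card {i'\<in>inner_idx As. i < i'}"
    unfolding length_filter_drop by (rule arg_cong[where f=card]) (auto simp: inner_idx_butlast)
  finally show ?thesis .
qed

lemma first_inner_descent_append:
  "\<exists>A\<in>set As. A \<noteq> [] \<Longrightarrow> first_inner_descent (As @ Bs) = first_inner_descent As"
  by (induction As) auto

lemma first_inner_descent_replicate_Nil: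
  "first_inner_descent (replicate e [] @ Bs) = first_inner_descent Bs"
  by (induction e) auto

lemma leading_flat_append: "\<exists>A\<in>set As. A \<noteq> [] \<Longrightarrow> leading_flat (As @ Bs) = leading_flat As"
  by (auto simp: leading_flat_def takeWhile_append)

lemma leading_flat_Cons_Nil: "leading_flat ([] # As) = Suc (leading_flat As)"
  by (simp add: leading_flat_def)

lemma leading_flat_Cons_nonempty: "B \<noteq> [] \<Longrightarrow> leading_flat (B # Bs) = 0"
  by (simp add: leading_flat_def)

lemma nth_less_leading_flat: "i < leading_flat As \<Longrightarrow> As ! i = []"
  unfolding leading_flat_def by (metis (mono_tags) nth_mem set_takeWhileD takeWhile_nth)

lemma leading_flat_le: "i < length As \<Longrightarrow> As ! i \<noteq> [] \<Longrightarrow> leading_flat As \<le> i"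
  using nth_less_leading_flat[of i As] by (cases "i < leading_flat As") auto

lemma leading_flat_split:
  assumes "\<exists>A\<in>set As. A \<noteq> []"
  obtains B Bs where "As = replicate (leading_flat As) [] @ B # Bs" "B \<noteq> []"
proof -
  have tw: "takeWhile (\<lambda>A. A = []) As = replicate (leading_flat As) []"
    unfolding leading_flat_def by (rule replicate_length_same[symmetric]) (auto dest: set_takeWhileD)
  have "dropWhile (\<lambda>A. A = []) As \<noteq> []" using assms by (auto simp: dropWhile_eq_Nil_conv)
  then obtain B Bs where dw: "dropWhile (\<lambda>A. A = []) As = B # Bs"
    by (cases "dropWhile (\<lambda>A. A = []) As") auto
  have "B \<noteq> []" using hd_dropWhile[of "\<lambda>A. A = []" As] dw by auto
  moreover have "As = replicate (leading_flat As) [] @ B # Bs"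
    using takeWhile_dropWhile_id[of "\<lambda>A. A = []" As] tw dw by simp
  ultimately show ?thesis using that by blast
qed

lemma take_leading_flat: "take (leading_flat As) As = replicate (leading_flat As) []"
  unfolding leading_flat_def
  by (metis (mono_tags) replicate_length_same set_takeWhileD takeWhile_eq_take)

lemma trailing_flat_snoc_Nil: "trailing_flat (As @ [[]]) = Suc (trailing_flat As)"
  by (simp add: trailing_flat_def)

lemma trailing_flat_Cons_Nil: "\<exists>A\<in>set As. A \<noteq> [] \<Longrightarrow> trailing_flat ([] # As) = trailing_flat As"
  by (auto simp: trailing_flat_def takeWhile_append)

lemma trailing_flat_eq_0_iff: "As \<noteq> [] \<Longrightarrow> trailing_flat As = 0 \<longleftrightarrow> last As \<noteq> []"
  by (cases As rule: rev_cases) (auto simp: trailing_flat_def)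

lemma adj_count_DU_climb: "dyck_paths As \<Longrightarrow> adj_count is_DU (climb As) = valley_sum As"
proof (induction As)
  case (Cons A As)
  have "adj_count is_DU (climb (A # As))
      = adj_count is_DU A + adj_count is_DU (U # climb As) + (if A \<noteq> [] \<and> last A = D then 1 else 0)"
    by (simp add: adj_count_append)
  also have "adj_count is_DU (U # climb As) = adj_count is_DU (climb As)"
    by (simp add: adj_count_Cons)
  finally show ?case using Cons dyck_path_last[of A] by auto
qed simp

lemma adj_count_DU_replicate_D: "adj_count is_DU (replicate n D) = 0"
  by (induction n) (auto simp: adj_count_Cons)

lemma valley_count_mountain: "dyck_paths As \<Longrightarrow> valley_count (mountain As) = valley_sum As"
  by (cases "As = []")
     (auto simp: valley_count_eq_adj_count mountain_def adj_count_append adj_count_DU_replicate_D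
        adj_count_DU_climb dest: climb_snoc_U)

lemma adj3_count_U_Cons: "adj3_count is_DUU (U # R) = adj3_count is_DUU R"
  by (simp add: adj3_count_Cons)

lemma adj3_count_replicate_D: "adj3_count is_DUU (replicate n D) = 0"
  by (induction n) (auto simp: adj3_count_Cons)

lemma adj3_count_append_U:
  assumes "A \<noteq> []" "last A = D"
  shows "adj3_count is_DUU (A @ U # R)
    = adj3_count is_DUU A + (if R \<noteq> [] \<and> hd R = U then 1 else 0) + adj3_count is_DUU R"
  using assms
proof (induction A)
  case (Cons x A)
  show ?case
  proof (cases "A = []")
    case True
    then show ?thesis using Cons.prems by (cases R) (auto simp: adj3_count_Cons)
  next
    case False
    then have IH: "adj3_count is_DUU (A @ U # R)
        = adj3_count is_DUU A + (if R \<noteq> [] \<and> hd R = U then 1 else 0) + adj3_count is_DUU R"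
      using Cons by auto
    have "(2 \<le> length (A @ U # R) \<and> is_DUU x ((A @ U # R) ! 0) ((A @ U # R) ! 1)) =
          (2 \<le> length A \<and> is_DUU x (A ! 0) (A ! 1))"
    proof (cases "length A = 1")
      case True
      then obtain y where "A = [y]" by (cases A) auto
      then show ?thesis using Cons.prems by auto
    next
      case False
      moreover have "length A \<noteq> 0" using \<open>A \<noteq> []\<close> by simp
      ultimately have "2 \<le> length A" by linarith
      then show ?thesis by (auto simp: nth_append)
    qed
    moreover have "adj3_count is_DUU (x # A @ U # R) = adj3_count is_DUU (A @ U # R)
        + (if 2 \<le> length (A @ U # R) \<and> is_DUU x ((A @ U # R) ! 0) ((A @ U # R) ! 1) then 1 else 0)"
      by (rule adj3_count_Cons)
    moreover have "adj3_count is_DUU (x # A)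
        = adj3_count is_DUU A + (if 2 \<le> length A \<and> is_DUU x (A ! 0) (A ! 1) then 1 else 0)"
      by (rule adj3_count_Cons)
    ultimately show ?thesis using IH by simp
  qed
qed simp

lemma adj3_count_climb_descent:
  "dyck_paths As \<Longrightarrow> As \<noteq> [] \<Longrightarrow>
   adj3_count is_DUU (climb As @ replicate t D) = DUU_sum As + inner_count As"
proof (induction As)
  case (Cons A As)
  have dA: "dyck_path A" using Cons.prems by auto
  show ?case
  proof (cases "As = []")
    case True
    then show ?thesis using dA adj3_count_append_U[of A "replicate t D"] dyck_path_last[OF dA]
      by (cases "A = []")
         (auto simp: inner_count_def adj3_count_replicate_D adj3_count_U_Cons)
  next
    case False
    have IH: "adj3_count is_DUU (climb As @ replicate t D) = DUU_sum As + inner_count As"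
      using Cons False by auto
    have hd: "climb As @ replicate t D \<noteq> [] \<and> hd (climb As @ replicate t D) = U"
      using climb_hd[of As] Cons.prems False by auto
    have inner: "inner_count (A # As) = (if A = [] then 0 else 1) + inner_count As"
      using False by (simp add: inner_count_def)
    show ?thesis
    proof (cases "A = []")
      case True then show ?thesis using IH inner by (simp add: adj3_count_U_Cons)
    next
      case False
      have "adj3_count is_DUU (climb (A # As) @ replicate t D)
          = adj3_count is_DUU (A @ U # (climb As @ replicate t D))" by simp
      also have "\<dots> = adj3_count is_DUU A + 1 + adj3_count is_DUU (climb As @ replicate t D)"
        using adj3_count_append_U[OF False dyck_path_last[OF dA False]] hd by simp
      finally show ?thesis using IH inner False by simp
    qed
  qed
qed simp

lemma DUU_count_mountain:
  "dyck_paths As \<Longrightarrow> As \<noteq> [] \<Longrightarrow> DUU_count (mountain As) = DUU_sum As + inner_count As"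
  by (simp add: DUU_count_eq_adj3_count mountain_def adj3_count_climb_descent)

lemma first_descent_len_append_U:
  assumes d: "dyck_path A" and ne: "A \<noteq> []"
  shows "first_descent_len (A @ U # R) = first_descent_len A"
proof -
  have "D \<in> set A" using ne dyck_path_last[OF d ne] by (metis last_in_set)
  then have "dropWhile (\<lambda>s. s = U) (A @ U # R) = dropWhile (\<lambda>s. s = U) A @ U # R"
    by (rule dropWhile_append1) simp
  then show ?thesis unfolding first_descent_len_def by (simp add: takeWhile_append_stop)
qed

lemma first_descent_len_climb_descent:
  "dyck_paths As \<Longrightarrow> first_descent_len (climb As @ replicate t D)
     = (if \<forall>A\<in>set As. A = [] then t else first_inner_descent As)"
proof (induction As)
  case Nil
  show ?case by (cases t) (auto simp: first_descent_len_def)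
next
  case (Cons A As)
  then show ?case
    using first_descent_len_append_U[of A] by (cases "A = []") (auto simp: first_descent_len_def)
qed

lemma first_descent_len_mountain:
  "dyck_paths As \<Longrightarrow> first_descent_len (mountain As)
     = (if \<forall>A\<in>set As. A = [] then length As else first_inner_descent As)"
  unfolding mountain_def by (rule first_descent_len_climb_descent)

lemma takeWhile_U_rev_climb:
  "dyck_paths As \<Longrightarrow> length (takeWhile (\<lambda>s. s = U) (rev (climb As)))
     = (if \<forall>A\<in>set As. A = [] then length As else Suc (trailing_flat As))"
proof (induction As rule: rev_induct)
  case (snoc A As)
  have dA: "dyck_path A" using snoc.prems by auto
  show ?case
  proof (cases "A = []")
    case True then show ?thesis using snoc by (simp add: trailing_flat_def)
  next
    case False
    obtain B x where A: "A = B @ [x]" using False by (cases A rule: rev_cases) auto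
    have "x = D" using dyck_path_last[OF dA False] A by simp
    then show ?thesis using A by (simp add: trailing_flat_def)
  qed
qed simp

lemma last_ascent_len_mountain:
  assumes d: "dyck_paths As" and ne: "As \<noteq> []"
  shows "last_ascent_len (mountain As)
     = (if \<forall>A\<in>set As. A = [] then length As else Suc (trailing_flat As))"
proof -
  obtain Z where Z: "climb As = Z @ [U]" using climb_snoc_U[OF ne] by blast
  have "dropWhile (\<lambda>s. s = D) (rev (mountain As)) = rev (climb As)"
    by (simp add: mountain_def Z dropWhile_append)
  then show ?thesis unfolding last_ascent_len_def using takeWhile_U_rev_climb[OF d] by simp
qed

lemma terminal_descent_len_mountain: "As \<noteq> [] \<Longrightarrow> terminal_descent_len (mountain As) = length As"
  by (auto simp: terminal_descent_len_def mountain_def takeWhile_append dest!: climb_snoc_U)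

context
  fixes e :: nat and B :: path and Bs :: "path list"
  assumes d: "dyck_paths (B # Bs)" and B: "B \<noteq> []"
begin

private abbreviation P where "P \<equiv> mountain (replicate e [] @ B # Bs)"

private lemma P_eq: "P = replicate e U @ B @ U # climb Bs @ replicate (e + Suc (length Bs)) D"
  by (simp add: mountain_def)

lemma valley_vertex_mountain_first: "valley_vertex P (e + length B) \<and> height P (e + length B) = int e"
proof
  let ?R = "B @ U # climb Bs @ replicate (e + Suc (length Bs)) D"
  have lB: "0 < length B" using B by simp
  have "e + length B - 1 = length (replicate e U) + (length B - 1)"
    using lB by (simp del: length_greater_0_conv)
  then have "P ! (e + length B - 1) = ?R ! (length B - 1)"
    unfolding P_eq by (simp only: nth_append_length_plus)
  also have "\<dots> = last B" using lB B by (simp add: nth_append last_conv_nth)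
  finally show "valley_vertex P (e + length B)"
    using dyck_path_last[of B] d B by (simp add: valley_vertex_def P_eq nth_append)
  have "height P (e + length B) = final_height (replicate e U) + height ?R (length B)"
    using height_append_length_plus[of "replicate e U" ?R "length B"] unfolding P_eq by simp
  then show "height P (e + length B) = int e"
    using d by (simp add: height_append_le final_height_def dyck_path_iff height_replicate)
qed

lemma valley_vertex_mountain_height_ge:
  assumes v: "valley_vertex P v"
  shows "int e \<le> height P v"
proof -
  have v0: "0 < v" "v < length P" "P ! (v - 1) = D" "P ! v = U"
    using v by (auto simp: valley_vertex_def)
  let ?C = "climb (replicate e [] @ B # Bs)"
  have vC: "v < length ?C"
    using mountain_nth_descent[of _ v] v0 by (metis not_less)
  have ve: "e \<le> v - 1"
  proof (rule ccontr)
    assume "\<not> e \<le> v - 1"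
    then have "P ! (v - 1) = U" by (simp add: P_eq nth_append)
    then show False using v0(3) by simp
  qed
  have "height P v = height ?C v"
    unfolding mountain_def using vC by (intro height_append_le) simp
  also have "\<dots> = int e + height (climb (B # Bs)) (v - e)"
    using ve by (simp add: height_append_ge)
  finally show ?thesis
    using height_climb_nonneg[OF d, of "v - e"] vC by simp
qed

end

lemma elevation_mountain:
  assumes d: "dyck_paths As" and ex: "\<exists>A\<in>set As. A \<noteq> []"
  shows "elevation (mountain As) = int (leading_flat As)"
proof -
  define e where "e = leading_flat As"
  obtain B Bs where As: "As = replicate e [] @ B # Bs" and B: "B \<noteq> []"
    using leading_flat_split[OF ex] unfolding e_def .
  have dBBs: "dyck_paths (B # Bs)" using d As by auto
  let ?V = "{v. valley_vertex (mountain As) v}"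
  have "finite ?V"
    by (rule finite_subset[of _ "{..<length (mountain As)}"]) (auto simp: valley_vertex_def)
  moreover have "e + length B \<in> ?V" "height (mountain As) (e + length B) = int e"
    using valley_vertex_mountain_first[OF dBBs B, of e] by (simp_all add: As)
  moreover have "\<And>v. v \<in> ?V \<Longrightarrow> int e \<le> height (mountain As) v"
    using valley_vertex_mountain_height_ge[OF dBBs B, of e] by (simp add: As)
  ultimately have "Min (height (mountain As) ` ?V) = int e"
    by (intro Min_eqI) (auto intro!: image_eqI[of _ _ "e + length B"])
  then show ?thesis by (simp add: elevation_def e_def)
qed

section \<open>Arches of a mountain\<close>

definition arch_up :: "path list \<Rightarrow> nat \<Rightarrow> nat" where
  "arch_up As i = length (climb (take i As)) + length (As ! i)"

definition arch_down :: "path list \<Rightarrow> nat \<Rightarrow> nat" where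
  "arch_down As i = length (climb As) + (length As - 1 - i)"

lemma climb_split:
  "i < length As \<Longrightarrow> climb As = climb (take i As) @ As ! i @ U # climb (drop (Suc i) As)"
  by (metis append_Cons append_assoc climb_Cons climb_append id_take_nth_drop)

lemma mountain_split:
  "i < length As \<Longrightarrow>
   mountain As = climb (take i As) @ As ! i @ U # climb (drop (Suc i) As) @ replicate (length As) D"
  by (simp add: mountain_def climb_split)

lemma length_climb_split:
  "i < length As \<Longrightarrow> length (climb As) = arch_up As i + 1 + length (climb (drop (Suc i) As))"
  by (simp add: arch_up_def climb_split[of i As])

context
  fixes As :: "path list" and i :: nat
  assumes d: "dyck_paths As" and i: "i < length As"
begin

private lemma dpre: "dyck_paths (take i As)"
  using d by (auto dest: in_set_takeD)

private lemma dpost: "dyck_paths (drop (Suc i) As)"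
  using d by (auto dest: in_set_dropD)

private lemma dA: "dyck_path (As ! i)"
  using d i by auto

lemma arch_up_less_length_climb: "arch_up As i < length (climb As)"
  using length_climb_split[OF i] by simp

lemma arch_down_less_length: "arch_down As i < length (mountain As)"
  using i by (simp add: arch_down_def length_mountain)

lemma arch_up_less_arch_down: "arch_up As i < arch_down As i"
  using arch_up_less_length_climb by (simp add: arch_down_def)

lemma height_arch_up: "height (mountain As) (arch_up As i) = int i"
proof -
  let ?rest = "U # climb (drop (Suc i) As) @ replicate (length As) D"
  have "height (mountain As) (arch_up As i)
      = height (climb (take i As) @ As ! i @ ?rest) (length (climb (take i As)) + length (As ! i))"
    by (simp add: mountain_split[OF i] arch_up_def)
  also have "\<dots> = final_height (climb (take i As)) + height (As ! i @ ?rest) (length (As ! i))"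
    by (rule height_append_length_plus)
  also have "\<dots> = int i + final_height (As ! i)"
    using final_height_climb[OF dpre] i by (simp add: height_append_le final_height_def)
  finally show ?thesis using dA by (simp add: dyck_path_iff)
qed

lemma mountain_nth_arch_up: "mountain As ! arch_up As i"
  by (simp add: mountain_split[OF i] arch_up_def nth_append)

lemma height_inside_arch:
  assumes v1: "arch_up As i < v" and v2: "v \<le> arch_down As i"
  shows "int i + 1 \<le> height (mountain As) v"
proof (cases "v \<le> length (climb As)")
  case True
  let ?pre = "climb (take i As) @ As ! i @ [U]" and ?post = "climb (drop (Suc i) As)"
  define w where "w = v - Suc (arch_up As i)"
  have w: "w \<le> length ?post" using True v1 length_climb_split[OF i] by (simp add: w_def)
  have "height (mountain As) v = height (?pre @ ?post @ replicate (length As) D) (length ?pre + w)"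
    using v1 by (simp add: mountain_split[OF i] w_def arch_up_def)
  also have "\<dots> = final_height ?pre + height (?post @ replicate (length As) D) w"
    by (rule height_append_length_plus)
  also have "\<dots> = int i + 1 + height ?post w"
    using final_height_climb[OF dpre] i dA w by (simp add: height_append_le dyck_path_iff)
  finally show ?thesis using height_climb_nonneg[OF dpost w] by simp
next
  case False
  define t where "t = v - length (climb As)"
  have t: "t \<le> length As" "t \<le> length As - 1 - i"
    using v2 False by (auto simp: t_def arch_down_def)
  have "height (mountain As) v = height (mountain As) (length (climb As) + t)"
    using False by (simp add: t_def)
  also have "\<dots> = int (length As) - int t" by (rule height_mountain_descent[OF d t(1)])
  finally show ?thesis using t i by simp
qed

lemma height_after_arch_down: "height (mountain As) (Suc (arch_down As i)) = int i"
  using height_mountain_descent[OF d, of "length As - i"] i by (simp add: arch_down_def Suc_diff_Suc)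

lemma match_down_arch_up: "match_down (mountain As) (arch_up As i) = arch_down As i"
  unfolding match_down_def
proof (rule Least_equality)
  show "arch_up As i < arch_down As i \<and> arch_down As i < length (mountain As) \<and>
        height (mountain As) (Suc (arch_down As i)) = height (mountain As) (arch_up As i)"
    using arch_up_less_arch_down arch_down_less_length height_after_arch_down height_arch_up by simp
next
  fix y
  assume y: "arch_up As i < y \<and> y < length (mountain As)
    \<and> height (mountain As) (Suc y) = height (mountain As) (arch_up As i)"
  show "arch_down As i \<le> y"
  proof (rule ccontr)
    assume "\<not> arch_down As i \<le> y"
    then have "int i + 1 \<le> height (mountain As) (Suc y)" using y by (intro height_inside_arch) auto
    then show False using y height_arch_up by simp
  qed
qed

lemma match_down_eq_arch_down:
  assumes k: "k < length (mountain As)" "mountain As ! k"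
    and md: "match_down (mountain As) k = arch_down As i"
  shows "k = arch_up As i"
proof -
  note first_return = match_down_first_return[OF dyck_path_mountain[OF d] k, unfolded md]
  have hk: "height (mountain As) k = int i"
    using first_return(1) height_after_arch_down by simp
  show ?thesis
  proof (rule linorder_cases[of k "arch_up As i"])
    assume lt: "k < arch_up As i"
    show ?thesis
    proof (cases "Suc k = arch_up As i")
      case True
      then show ?thesis using k height_Suc[of k "mountain As"] hk height_arch_up by simp
    next
      case False
      then have "k < arch_up As i - 1" using lt by simp
      moreover have "arch_up As i - 1 < arch_down As i" using arch_up_less_arch_down by simp
      ultimately show ?thesis
        using first_return(2)[of "arch_up As i - 1"] lt hk height_arch_up by simp
    qed
  next
    assume "arch_up As i < k"
    then have "int i + 1 \<le> height (mountain As) k"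
      using first_return(1) height_inside_arch by simp
    then show ?thesis using hk by simp
  qed simp
qed

end

lemma mountain_nth_before_arch_up:
  assumes i: "i < length As" and ne: "As ! i \<noteq> []"
  shows "mountain As ! (arch_up As i - 1) = last (As ! i)"
proof -
  have lB: "0 < length (As ! i)" using ne by simp
  have pe: "arch_up As i - 1 = length (climb (take i As)) + (length (As ! i) - 1)" using lB
    by (simp add: arch_up_def del: length_greater_0_conv)
  have "mountain As ! (arch_up As i - 1)
      = (As ! i @ U # climb (drop (Suc i) As) @ replicate (length As) D) ! (length (As ! i) - 1)"
    unfolding mountain_split[OF i] pe by (simp only: nth_append_length_plus append_assoc append_Cons)
  also have "\<dots> = As ! i ! (length (As ! i) - 1)" using lB by (simp add: nth_append)
  finally show ?thesis using ne by (simp add: last_conv_nth)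
qed

lemma mountain_nth_before_flat_arch_up:
  assumes i: "i < length As" and e: "As ! i = []" and i0: "0 < i"
  shows "mountain As ! (arch_up As i - 1) = U"
proof -
  have ne: "take i As \<noteq> []" using i0 i by (cases As) auto
  obtain Z where Z: "climb (take i As) = Z @ [U]" using climb_snoc_U[OF ne] by blast
  have "arch_up As i - 1 = length Z" by (simp add: arch_up_def e Z)
  then show ?thesis unfolding mountain_split[OF i] by (simp add: Z e nth_append)
qed

lemma mountain_nth_after_arch_up:
  assumes i: "i < length As"
  shows "mountain As ! Suc (arch_up As i) = (climb (drop (Suc i) As) @ replicate (length As) D) ! 0"
proof -
  have pe: "Suc (arch_up As i) = length (climb (take i As) @ As ! i @ [U]) + 0" by (simp add: arch_up_def)
  have eq: "climb (take i As) @ As ! i @ U # climb (drop (Suc i) As) @ replicate (length As) D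
     = (climb (take i As) @ As ! i @ [U]) @ (climb (drop (Suc i) As) @ replicate (length As) D)" by simp
  show ?thesis unfolding mountain_split[OF i] pe eq
    by (rule nth_append_length_plus)
qed

text \<open>A key downstep of a mountain is matched with the \<open>U\<close> closing some component
  \<open>A\<^sub>i\<close>: the \<open>D\<close> before that \<open>U\<close> forces \<open>A\<^sub>i \<noteq> []\<close>, and the \<open>U\<close> after it forces \<open>A\<^sub>i\<close>
  not to be the last component.\<close>

lemma key_down_mountainE:
  assumes d: "dyck_paths As" and ne: "As \<noteq> []" and kd: "key_down (mountain As) l"
  obtains i where "i \<in> inner_idx As" "l = arch_down As i"
proof -
  have l: "l < length (mountain As)" "length (climb As) \<le> l"
    using kd by (auto simp: key_down_def terminal_descent_len_mountain[OF ne] length_mountain)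
  obtain k where k: "0 < k" "Suc k < length (mountain As)" "mountain As ! k" "match_down (mountain As) k = l"
      "\<not> mountain As ! (k - 1)" "mountain As ! Suc k"
    using kd by (auto simp: key_down_def)
  define i where "i = length As - 1 - (l - length (climb As))"
  have i: "i < length As" using ne by (simp add: i_def)
  have li: "l = arch_down As i" using l ne by (simp add: i_def arch_down_def length_mountain)
  have kk: "k = arch_up As i" using match_down_eq_arch_down[OF d i, of k] k li by simp
  have "As ! i \<noteq> []"
  proof
    assume e: "As ! i = []"
    show False
    proof (cases "i = 0")
      case True then show False using kk k e by (simp add: arch_up_def)
    next
      case False then show False using mountain_nth_before_flat_arch_up[OF i e] kk k by simp
    qed
  qed
  moreover have "i < length As - 1"
  proof (rule ccontr)
    assume "\<not> i < length As - 1"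
    then have "drop (Suc i) As = []" using i by simp
    then have "\<not> mountain As ! Suc k" using mountain_nth_after_arch_up[OF i] kk ne by (simp add: nth_replicate)
    then show False using k by simp
  qed
  ultimately show ?thesis using that li by (auto simp: inner_idx_def)
qed

lemma key_down_arch_down:
  assumes d: "dyck_paths As" and ne: "As \<noteq> []" and iS: "i \<in> inner_idx As"
  shows "key_down (mountain As) (arch_down As i)"
proof -
  have i: "i < length As" and ilt: "i < length As - 1" and nei: "As ! i \<noteq> []"
    using iS by (auto simp: inner_idx_def)
  have dA: "dyck_path (As ! i)" using d i by auto
  have post: "drop (Suc i) As \<noteq> []" using ilt by simp
  have dpost: "dyck_paths (drop (Suc i) As)" using d by (auto dest: in_set_dropD)
  have "climb (drop (Suc i) As) ! 0" "climb (drop (Suc i) As) \<noteq> []"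
    using climb_hd[OF dpost post] by (auto simp: hd_conv_nth[symmetric])
  then have after: "mountain As ! Suc (arch_up As i)"
    using mountain_nth_after_arch_up[OF i] by (simp add: nth_append)
  have before: "\<not> mountain As ! (arch_up As i - 1)"
    using mountain_nth_before_arch_up[OF i nei] dyck_path_last[OF dA nei] by simp
  have "0 < arch_up As i" using nei by (simp add: arch_up_def)
  moreover have "Suc (arch_up As i) < length (mountain As)"
    using arch_up_less_length_climb[OF d i] i by (simp add: length_mountain)
  moreover have "length (mountain As) - terminal_descent_len (mountain As) \<le> arch_down As i"
    by (simp add: terminal_descent_len_mountain[OF ne] length_mountain arch_down_def)
  ultimately show ?thesis unfolding key_down_def
    using after before arch_down_less_length[OF d i] mountain_nth_arch_up[OF d i] match_down_arch_up[OF d i]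
    by (intro conjI exI[of _ "arch_up As i"]) auto
qed

lemma key_down_set_mountain:
  assumes d: "dyck_paths As" and ne: "As \<noteq> []"
  shows "{l. l < length (mountain As) \<and> key_down (mountain As) l} = arch_down As ` inner_idx As"
proof (intro set_eqI iffI)
  fix l assume "l \<in> {l. l < length (mountain As) \<and> key_down (mountain As) l}"
  then obtain i where "i \<in> inner_idx As" "l = arch_down As i"
    using key_down_mountainE[OF d ne] by blast
  then show "l \<in> arch_down As ` inner_idx As" by blast
next
  fix l assume "l \<in> arch_down As ` inner_idx As"
  then obtain i where i: "i \<in> inner_idx As" "l = arch_down As i" by blast
  then have "i < length As" by (auto simp: inner_idx_def)
  then show "l \<in> {l. l < length (mountain As) \<and> key_down (mountain As) l}"
    using i key_down_arch_down[OF d ne] arch_down_less_length[OF d] by simp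
qed

lemma match_up_arch_down:
  assumes d: "dyck_paths As" and i: "i < length As"
  shows "match_up (mountain As) (arch_down As i) = arch_up As i"
  unfolding match_up_def
proof (rule the_equality)
  show "arch_up As i < length (mountain As) \<and> mountain As ! arch_up As i = U
      \<and> match_down (mountain As) (arch_up As i) = arch_down As i"
    using arch_up_less_length_climb[OF d i] mountain_nth_arch_up[OF d i] match_down_arch_up[OF d i]
    by (simp add: length_mountain)
qed (use match_down_eq_arch_down[OF d i] in auto)

text \<open>Key downsteps are ordered from left to right, so the \<open>j\<close>-th one belongs to the
  component with exactly \<open>j\<close> inner components to its right.\<close>

lemma key_downs_mountain_nth:
  assumes d: "dyck_paths As" and ne: "As \<noteq> []" and j: "j < card (inner_idx As)"
  obtains i where "i \<in> inner_idx As" "key_downs (mountain As) ! j = arch_down As i"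
    "card {i'\<in>inner_idx As. i < i'} = j"
proof -
  define P where "P = mountain As"
  have inj: "inj_on (arch_down As) (inner_idx As)" by (auto simp: inj_on_def arch_down_def inner_idx_def)
  have "length (key_downs P) = card (inner_idx As)"
    unfolding key_downs_def length_filter_upt P_def key_down_set_mountain[OF d ne]
    using card_image[OF inj] by simp
  then have jl: "j < length (filter (key_down P) [0..<length P])" using j by (simp add: key_downs_def)
  define l where "l = key_downs P ! j"
  have kdl: "key_down P l" and cnt: "card {x. x < l \<and> key_down P x} = j"
    using nth_filter_upt[OF jl] by (auto simp: l_def key_downs_def length_filter_upt)
  obtain i where iS: "i \<in> inner_idx As" and li: "l = arch_down As i"
    using key_down_mountainE[OF d ne] kdl by (auto simp: P_def)
  have iAs: "i < length As" using iS by (auto simp: inner_idx_def)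
  have "{x. x < l \<and> key_down P x} = {x \<in> {x. x < length P \<and> key_down P x}. x < l}"
    using arch_down_less_length[OF d iAs] li by (auto simp: P_def)
  also have "\<dots> = {x \<in> arch_down As ` inner_idx As. x < arch_down As i}"
    by (simp add: P_def key_down_set_mountain[OF d ne] li)
  also have "\<dots> = arch_down As ` {i'\<in>inner_idx As. i < i'}"
    using iS by (auto simp: arch_down_def inner_idx_def)
  finally have "{x. x < l \<and> key_down P x} = arch_down As ` {i'\<in>inner_idx As. i < i'}" .
  then have "card {i'\<in>inner_idx As. i < i'} = j"
    using cnt card_image[OF inj_on_subset[OF inj, of "{i'\<in>inner_idx As. i < i'}"]] by auto
  then show ?thesis using that iS li by (simp add: l_def P_def)
qed

lemma Phi_snoc:
  assumes "u \<noteq> []"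
  shows "Phi (u @ [x]) = phi_step (u @ [x]) (length u) (Phi u)"
proof -
  have same_steps: "phi_step (u @ [x]) i = phi_step u i" if "i \<in> set [1..<length u]" for i
  proof -
    have "(u @ [x]) ! i = u ! i" "(u @ [x]) ! (i - 1) = u ! (i - 1)" "take i (u @ [x]) = take i u"
      using that by (auto simp: nth_append)
    then show ?thesis by (intro ext) (simp only: phi_step_def)
  qed
  have "[1..<length (u @ [x])] = [1..<length u] @ [length u]"
    using assms by (cases u) auto
  then have "Phi (u @ [x])
      = phi_step (u @ [x]) (length u) (foldl (\<lambda>P i. phi_step (u @ [x]) i P) [U, D] [1..<length u])"
    by (simp add: Phi_def)
  also have "foldl (\<lambda>P i. phi_step (u @ [x]) i P) [U, D] [1..<length u] = Phi u"
    unfolding Phi_def using same_steps by (intro foldl_cong) auto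
  finally show ?thesis .
qed

lemma phi_step_snoc:
  assumes "u \<noteq> []"
  shows "phi_step (u @ [x]) (length u) P =
    (let prev = last u; a = asc_count u; m = Max (set u) in
     if x = 0 then
       (let k = last_UD P in take k P @ [U, U, D, D] @ drop (Suc (Suc k)) P)
     else if x = prev then U # P @ [D]
     else if x = a + 1 then P @ [U, D]
     else
       (let Ai = (if prev = 0 then [m..<Suc a] else [Suc m..<Suc a]);
            j = (THE j. j < length Ai \<and> Ai ! j = x);
            e = nat (elevation P);
            l = key_downs P ! j;
            k = match_up P l;
            Q = take l P @ [U, D] @ drop l P;
            R = drop e Q
        in take (k - e) R @ replicate e U @ drop (k - e) R))"
  using assms by (simp add: phi_step_def nth_append last_conv_nth Let_def)

lemma last_UD_mountain:
  assumes ne: "As \<noteq> []"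
  shows "last_UD (mountain As) = length (climb As) - 1"
proof -
  obtain Z where Z: "climb As = Z @ [U]" using climb_snoc_U[OF ne] by blast
  have P: "mountain As = Z @ U # replicate (length As) D" by (simp add: mountain_def Z)
  have "(GREATEST k. Suc k < length (mountain As) \<and> mountain As ! k \<and> \<not> mountain As ! Suc k) = length Z"
  proof (rule Greatest_equality)
    show "Suc (length Z) < length (mountain As) \<and> mountain As ! length Z \<and> \<not> mountain As ! Suc (length Z)"
      using ne by (simp add: P nth_append)
  next
    fix y assume y: "Suc y < length (mountain As) \<and> mountain As ! y \<and> \<not> mountain As ! Suc y"
    show "y \<le> length Z"
    proof (rule ccontr)
      assume "\<not> y \<le> length Z"
      then show False using y mountain_nth_descent[of As y] by (simp add: Z)
    qed
  qed
  then show ?thesis unfolding last_UD_def by (simp add: Z)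
qed

lemma phi_zero_mountain:
  assumes ne: "As \<noteq> []"
  shows "(let k = last_UD (mountain As) in
          take k (mountain As) @ [U, U, D, D] @ drop (Suc (Suc k)) (mountain As))
     = mountain (As @ [[]])"
proof -
  obtain Z where Z: "climb As = Z @ [U]" using climb_snoc_U[OF ne] by blast
  obtain h where h: "length As = Suc h" using ne by (cases As) auto
  show ?thesis using last_UD_mountain[OF ne] by (simp add: Let_def mountain_def Z h)
qed

lemma mountain_Cons_Nil: "mountain ([] # As) = U # mountain As @ [D]"
  by (simp add: mountain_def replicate_append_same)

lemma mountain_single: "mountain [B] = B @ [U, D]"
  by (simp add: mountain_def)

lemma phi_reroute_mountain:
  assumes As: "As = replicate e [] @ pre @ A # post" and i: "i = e + length pre"
  shows "(let Q = take (arch_down As i) (mountain As) @ [U, D] @ drop (arch_down As i) (mountain As);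
              R = drop e Q
          in take (arch_up As i - e) R @ replicate e U @ drop (arch_up As i - e) R)
       = mountain (pre @ [A] @ replicate e [] @ [mountain post])"
proof -
  have up: "arch_up As i - e = length (climb pre) + length A"
    by (simp add: arch_up_def As i nth_append)
  have down: "arch_down As i = length (climb As) + length post"
    by (simp add: arch_down_def As i)
  have "length As = length post + Suc i" by (simp add: As i)
  then have "mountain As = climb As @ replicate (length post) D @ replicate (Suc i) D"
    unfolding mountain_def by (simp only: replicate_add)
  then have "take (arch_down As i) (mountain As) = climb As @ replicate (length post) D"
    and "drop (arch_down As i) (mountain As) = replicate (Suc i) D"
    by (simp_all add: down)
  moreover have "climb As = replicate e U @ climb pre @ A @ U # climb post"
    by (simp add: As)
  ultimately show ?thesis
    unfolding Let_def up by (simp add: mountain_def i replicate_app_Cons_same)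
qed

text \<open>Case 4 of \<open>\<Phi>\<close> splits the component list \<open>replicate e [] @ pre @ A # post\<close> at a
  nonempty inner component \<open>A\<close> into \<open>pre @ [A] @ replicate e [] @ [mountain post]\<close>.\<close>

context
  fixes e :: nat and pre :: "path list" and A :: path and post :: "path list"
  assumes A: "A \<noteq> []" and post: "post \<noteq> []"
begin

lemma dyck_paths_reroute:
  "dyck_paths (replicate e [] @ pre @ A # post) \<Longrightarrow>
   dyck_paths (pre @ [A] @ replicate e [] @ [mountain post])"
  using dyck_path_mountain[of post] by auto

lemma first_inner_descent_reroute:
  "first_inner_descent (pre @ [A] @ replicate e [] @ [mountain post])
     = first_inner_descent (replicate e [] @ pre @ A # post)"
proof -
  have ex: "\<exists>B\<in>set (pre @ [A]). B \<noteq> []" using A by simp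
  show ?thesis
    using first_inner_descent_append[OF ex, of "replicate e [] @ [mountain post]"]
      first_inner_descent_append[OF ex, of post]
    by (simp add: first_inner_descent_replicate_Nil)
qed

lemma valley_sum_reroute:
  "dyck_paths post \<Longrightarrow> valley_sum (pre @ [A] @ replicate e [] @ [mountain post])
     = Suc (valley_sum (replicate e [] @ pre @ A # post))"
  using valley_count_mountain[of post] post A
  by (simp add: valley_count_eq_adj_count mountain_def)

lemma inner_count_reroute:
  "inner_count (replicate e [] @ pre @ A # post)
     = inner_count (pre @ [A] @ replicate e [] @ [mountain post]) + inner_count post"
  using post A by (cases post rule: rev_cases) (auto simp: inner_count_def butlast_append)

lemma DUU_sum_reroute:
  "dyck_paths post \<Longrightarrow>
   DUU_sum (pre @ [A] @ replicate e [] @ [mountain post])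
     + inner_count (pre @ [A] @ replicate e [] @ [mountain post])
   = DUU_sum (replicate e [] @ pre @ A # post) + inner_count (replicate e [] @ pre @ A # post)"
  using DUU_count_mountain[of post] post inner_count_reroute
  by (simp add: DUU_count_eq_adj3_count)

lemma leading_flat_reroute:
  "leading_flat (replicate e [] @ pre @ A # post) = e \<Longrightarrow>
   leading_flat (pre @ [A] @ replicate e [] @ [mountain post]) = 0"
  using A by (cases pre) (auto simp: leading_flat_def takeWhile_append)

lemma trailing_flat_reroute: "trailing_flat (pre @ [A] @ replicate e [] @ [mountain post]) = 0"
  using post by (simp add: trailing_flat_def mountain_def)

end

lemma split_at_nonempty:
  assumes "i < length As" "As ! i \<noteq> []"
  defines "e \<equiv> leading_flat As"
  shows "As = replicate e [] @ drop e (take i As) @ As ! i # drop (Suc i) As"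
    and "i = e + length (drop e (take i As))"
proof -
  have ei: "e \<le> i" using leading_flat_le[OF assms(1,2)] by (simp add: e_def)
  have "take e (take i As) = replicate e []"
    using take_leading_flat[of As] ei by (simp add: e_def min_absorb1)
  then have "take i As = replicate e [] @ drop e (take i As)"
    by (metis append_take_drop_id)
  then show "As = replicate e [] @ drop e (take i As) @ As ! i # drop (Suc i) As"
    using assms(1) by (metis append.assoc id_take_nth_drop)
  show "i = e + length (drop e (take i As))"
    using ei assms(1) by simp
qed

lemma asc_count_snoc:
  "asc_count (u @ [x]) = asc_count u + (if u \<noteq> [] \<and> last u < x then 1 else 0)"
  by (simp add: asc_count_eq_adj_count adj_count_snoc)

lemma desc_count_snoc:
  "desc_count (u @ [x]) = desc_count u + (if u \<noteq> [] \<and> last u > x then 1 else 0)"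
  by (simp add: desc_count_eq_adj_count adj_count_snoc)

lemma asc_count_all_zero: "\<forall>y\<in>set u. y = 0 \<Longrightarrow> asc_count u = 0"
proof (induction u rule: rev_induct)
  case (snoc x u) then show ?case by (auto simp: asc_count_snoc)
qed (simp add: asc_count_eq_adj_count)

lemma desc_count_all_zero: "\<forall>y\<in>set u. y = 0 \<Longrightarrow> desc_count u = 0"
proof -
  assume "\<forall>y\<in>set u. y = 0"
  then have "{i. Suc i < length u \<and> u ! i > u ! Suc i} = {}"
    using nth_mem[of _ u] by (metis (no_types, lifting) Collect_empty_eq Suc_lessD less_irrefl)
  then show ?thesis unfolding desc_count_def by (metis card.empty)
qed

lemma initial_zeros_snoc:
  "initial_zeros (u @ [x]) =
    (if \<forall>y\<in>set u. y = 0 then (if x = 0 then Suc (length u) else length u) else initial_zeros u)"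
  by (auto simp: initial_zeros_def takeWhile_append)

lemma initial_zeros_all_zero: "\<forall>y\<in>set u. y = 0 \<Longrightarrow> initial_zeros u = length u"
  by (simp add: initial_zeros_def takeWhile_eq_all_conv[THEN iffD2])

lemma terminal_zeros_snoc: "terminal_zeros (u @ [x]) = (if x = 0 then Suc (terminal_zeros u) else 0)"
  by (simp add: terminal_zeros_def)

lemma terminal_zeros_eq_0_iff: "u \<noteq> [] \<Longrightarrow> terminal_zeros u = 0 \<longleftrightarrow> last u \<noteq> 0"
  by (cases u rule: rev_cases) (auto simp: terminal_zeros_def)

lemma last_nonzero_idx_snoc_nonzero: "x \<noteq> 0 \<Longrightarrow> last_nonzero_idx (u @ [x]) = length u"
  unfolding last_nonzero_idx_def by (rule Greatest_equality) (auto simp: nth_append)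

lemma last_nonzero_idx:
  assumes "\<exists>y\<in>set u. y \<noteq> 0"
  shows "last_nonzero_idx u < length u \<and> u ! last_nonzero_idx u \<noteq> 0"
    and "k < length u \<Longrightarrow> u ! k \<noteq> 0 \<Longrightarrow> k \<le> last_nonzero_idx u"
proof -
  have ex: "\<exists>k. k < length u \<and> u ! k \<noteq> 0" using assms by (auto simp: in_set_conv_nth)
  show "last_nonzero_idx u < length u \<and> u ! last_nonzero_idx u \<noteq> 0"
    unfolding last_nonzero_idx_def using GreatestI_ex_nat[OF ex, of "length u"] by auto
  show "k < length u \<Longrightarrow> u ! k \<noteq> 0 \<Longrightarrow> k \<le> last_nonzero_idx u"
    unfolding last_nonzero_idx_def by (rule Greatest_le_nat[of _ _ "length u"]) auto
qed

lemma last_nonzero_idx_snoc_zero: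
  assumes "\<exists>y\<in>set u. y \<noteq> 0"
  shows "last_nonzero_idx (u @ [0]) = last_nonzero_idx u"
  unfolding last_nonzero_idx_def[of "u @ [0]"]
proof (rule Greatest_equality)
  show "last_nonzero_idx u < length (u @ [0]) \<and> (u @ [0]) ! last_nonzero_idx u \<noteq> 0"
    using last_nonzero_idx(1)[OF assms] by (simp add: nth_append)
next
  fix y assume y: "y < length (u @ [0]) \<and> (u @ [0]) ! y \<noteq> 0"
  then have "y < length u" by (auto simp: nth_append split: if_splits)
  then show "y \<le> last_nonzero_idx u" using y last_nonzero_idx(2)[OF assms] by (simp add: nth_append)
qed

lemma run_before_last_nonzero_snoc_zero:
  "\<exists>y\<in>set u. y \<noteq> 0 \<Longrightarrow> run_before_last_nonzero (u @ [0]) = run_before_last_nonzero u"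
  using last_nonzero_idx_snoc_zero[of u] last_nonzero_idx(1)[of u]
  by (simp add: run_before_last_nonzero_def Let_def nth_append)

lemma run_before_last_nonzero_snoc_nonzero:
  "x \<noteq> 0 \<Longrightarrow> run_before_last_nonzero (u @ [x]) = length (takeWhile (\<lambda>y. y = x) (rev u))"
  by (simp add: run_before_last_nonzero_def last_nonzero_idx_snoc_nonzero)

lemma ascent_seq_snocD:
  assumes "ascent_seq (u @ [x])" "u \<noteq> []"
  shows "ascent_seq u" "x \<le> Suc (asc_count u)"
proof -
  have a: "(u @ [x]) ! 0 = 0"
    "\<And>i. 1 \<le> i \<Longrightarrow> i < Suc (length u) \<Longrightarrow> (u @ [x]) ! i \<le> 1 + asc_count (take i (u @ [x]))"
    using assms(1) by (auto simp: ascent_seq_def)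
  show "ascent_seq u"
    unfolding ascent_seq_def
  proof (intro conjI allI impI)
    fix i assume "1 \<le> i \<and> i < length u"
    then show "u ! i \<le> 1 + asc_count (take i u)" using a(2)[of i] by (simp add: nth_append)
  qed (use assms(2) a(1) in \<open>auto simp: nth_append\<close>)
  show "x \<le> Suc (asc_count u)"
    using a(2)[of "length u"] assms(2) by (cases u) auto
qed

lemma avoids_021_snocD:
  assumes "avoids_021 (u @ [x])"
  shows "avoids_021 u" "x \<noteq> 0 \<Longrightarrow> \<forall>y\<in>set u. y \<le> x"
  using assms by (auto simp: avoids_021_def sorted_append)

lemma avoids_021_le_last:
  "avoids_021 u \<Longrightarrow> u \<noteq> [] \<Longrightarrow> last u \<noteq> 0 \<Longrightarrow> \<forall>y\<in>set u. y \<le> last u"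
  by (cases u rule: rev_cases) (auto dest: avoids_021_snocD(2))

section \<open>The invariant of \<open>\<Phi>\<close>\<close>

text \<open>The last conjunct is the bookkeeping that makes case 4 work: the number of key downsteps
  of \<open>\<Phi>(u)\<close> equals the number of admissible case-4 values \<open>A\<^sub>i\<close>.\<close>

definition statistics_agree :: "nat list \<Rightarrow> path list \<Rightarrow> bool" where
  "statistics_agree u As \<longleftrightarrow>
     (\<exists>A\<in>set As. A \<noteq> []) \<and>
     initial_zeros u = first_inner_descent As \<and>
     asc_count u = valley_sum As \<and>
     desc_count u = DUU_sum As + inner_count As \<and>
     Max (set u) \<le> asc_count u \<and>
     terminal_zeros u = trailing_flat As \<and>
     run_before_last_nonzero u = leading_flat As \<and>
     inner_count As + Max (set u) = asc_count u + (if last u = 0 then 1 else 0)"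

definition mountain_rep :: "nat list \<Rightarrow> path list \<Rightarrow> bool" where
  "mountain_rep u As \<longleftrightarrow> u \<noteq> [] \<and> As \<noteq> [] \<and> dyck_paths As \<and> Phi u = mountain As \<and>
     (if \<forall>y\<in>set u. y = 0 then As = replicate (length u) [] else statistics_agree u As)"

lemma mountain_rep_statistics:
  assumes "mountain_rep u As"
  shows "initial_zeros u = first_descent_len (mountain As)"
    and "asc_count u = valley_sum As"
    and "desc_count u = DUU_sum As + inner_count As"
    and "Max (set u) \<le> asc_count u"
proof -
  have d: "dyck_paths As" and ne: "As \<noteq> []" and u: "u \<noteq> []"
    using assms by (auto simp: mountain_rep_def)
  have "initial_zeros u = first_descent_len (mountain As) \<and> asc_count u = valley_sum As
      \<and> desc_count u = DUU_sum As + inner_count As \<and> Max (set u) \<le> asc_count u"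
  proof (cases "\<forall>y\<in>set u. y = 0")
    case True
    then have As: "As = replicate (length u) []" using assms by (simp add: mountain_rep_def)
    have "Max (set u) = 0" using True u by (simp add: Max_eq_iff)
    then show ?thesis using True u
      by (simp add: As initial_zeros_all_zero asc_count_all_zero first_descent_len_mountain
          desc_count_all_zero inner_count_def butlast_conv_take)
  next
    case False
    then have "statistics_agree u As" using assms by (simp add: mountain_rep_def)
    then show ?thesis using False first_descent_len_mountain[OF d]
      by (auto simp: statistics_agree_def)
  qed
  then show "initial_zeros u = first_descent_len (mountain As)" "asc_count u = valley_sum As"
    "desc_count u = DUU_sum As + inner_count As" "Max (set u) \<le> asc_count u"
    by auto
qed

lemma mountain_rep_singleton: "mountain_rep [0] [[]]"
  by (simp add: mountain_rep_def Phi_def mountain_def)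

context
  fixes u :: "nat list" and x :: nat and As :: "path list"
  assumes rep: "mountain_rep u As" and u_ne: "u \<noteq> []"
    and asc: "ascent_seq (u @ [x])" and av: "avoids_021 (u @ [x])"
begin

private lemma As_ne: "As \<noteq> []"
  using rep by (simp add: mountain_rep_def)

private lemma dyck_As: "dyck_paths As"
  using rep by (simp add: mountain_rep_def)

private lemma Phi_snoc_rep: "Phi (u @ [x]) = phi_step (u @ [x]) (length u) (mountain As)"
  using Phi_snoc[OF u_ne] rep by (simp add: mountain_rep_def)

private lemma all_zero_rep: "\<forall>y\<in>set u. y = 0 \<Longrightarrow> As = replicate (length u) []"
  using rep by (simp add: mountain_rep_def)

private lemma agree_rep: "\<exists>y\<in>set u. y \<noteq> 0 \<Longrightarrow> statistics_agree u As"
  using rep by (auto simp: mountain_rep_def)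

private lemma x_le: "x \<le> Suc (asc_count u)"
  using ascent_seq_snocD(2)[OF asc u_ne] .

private lemma Max_snoc: "Max (set (u @ [x])) = max x (Max (set u))"
  using u_ne by (simp add: Max_insert)

private lemma last_le_Max: "last u \<le> Max (set u)"
  using u_ne by simp

private lemma run_snoc_new_value: "x \<noteq> 0 \<Longrightarrow> x \<noteq> last u \<Longrightarrow> run_before_last_nonzero (u @ [x]) = 0"
  using run_before_last_nonzero_snoc_nonzero[of x u] u_ne by (cases u rule: rev_cases) auto

lemma mountain_rep_snoc_zero:
  assumes x0: "x = 0"
  shows "mountain_rep (u @ [x]) (As @ [[]])"
proof -
  have P: "Phi (u @ [x]) = mountain (As @ [[]])"
    using Phi_snoc_rep phi_step_snoc[OF u_ne] phi_zero_mountain[OF As_ne] x0 by (simp add: Let_def)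
  have "statistics_agree (u @ [x]) (As @ [[]])" if nz: "\<exists>y\<in>set u. y \<noteq> 0"
  proof -
    have agree: "statistics_agree u As" using agree_rep[OF nz] .
    then have ex: "\<exists>A\<in>set As. A \<noteq> []" by (simp add: statistics_agree_def)
    have "last As \<noteq> [] \<longleftrightarrow> last u \<noteq> 0"
      using agree trailing_flat_eq_0_iff[OF As_ne] terminal_zeros_eq_0_iff[OF u_ne]
      by (simp add: statistics_agree_def)
    then show ?thesis
      using agree nz x0 Max_snoc first_inner_descent_append[OF ex] leading_flat_append[OF ex]
        run_before_last_nonzero_snoc_zero[OF nz]
      by (auto simp: statistics_agree_def initial_zeros_snoc asc_count_snoc desc_count_snoc
          inner_count_snoc[OF As_ne] terminal_zeros_snoc trailing_flat_snoc_Nil)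
  qed
  then show ?thesis
    using P dyck_As all_zero_rep x0 by (auto simp: mountain_rep_def replicate_append_same)
qed

lemma mountain_rep_snoc_repeat:
  assumes x0: "x \<noteq> 0" and xp: "x = last u"
  shows "mountain_rep (u @ [x]) ([] # As)"
proof -
  have P: "Phi (u @ [x]) = mountain ([] # As)"
    using Phi_snoc_rep phi_step_snoc[OF u_ne] x0 xp by (simp add: Let_def mountain_Cons_Nil)
  have nz: "\<exists>y\<in>set u. y \<noteq> 0" using x0 xp u_ne by auto
  have agree: "statistics_agree u As" using agree_rep[OF nz] .
  then have ex: "\<exists>A\<in>set As. A \<noteq> []" by (simp add: statistics_agree_def)
  obtain w where w: "u = w @ [x]" using u_ne xp by (cases u rule: rev_cases) auto
  have "run_before_last_nonzero (u @ [x]) = Suc (run_before_last_nonzero u)"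
    using run_before_last_nonzero_snoc_nonzero[OF x0, of u] run_before_last_nonzero_snoc_nonzero[OF x0, of w]
    by (simp add: w)
  then have "statistics_agree (u @ [x]) ([] # As)"
    using agree nz x0 xp Max_snoc last_le_Max trailing_flat_Cons_Nil[OF ex]
      terminal_zeros_eq_0_iff[OF u_ne]
    by (auto simp: statistics_agree_def initial_zeros_snoc asc_count_snoc desc_count_snoc
        inner_count_Cons_Nil[OF As_ne] terminal_zeros_snoc leading_flat_Cons_Nil)
  then show ?thesis using P dyck_As x0 by (auto simp: mountain_rep_def)
qed

lemma mountain_rep_snoc_new_ascent:
  assumes x0: "x \<noteq> 0" and xp: "x \<noteq> last u" and xa: "x = asc_count u + 1"
  shows "mountain_rep (u @ [x]) [mountain As]"
proof -
  have P: "Phi (u @ [x]) = mountain [mountain As]"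
    using Phi_snoc_rep phi_step_snoc[OF u_ne] x0 xp xa by (simp add: Let_def mountain_single)
  have mne: "mountain As \<noteq> []" using As_ne by (simp add: mountain_def)
  note stats = mountain_rep_statistics[OF rep]
  have lm: "last u < x" using stats(4) last_le_Max xa by linarith
  have Mx: "Max (set (u @ [x])) = x" using Max_snoc stats(4) xa by simp
  have "statistics_agree (u @ [x]) [mountain As]"
    using stats mne x0 lm u_ne xa Mx run_snoc_new_value[OF x0 xp]
      valley_count_mountain[OF dyck_As] DUU_count_mountain[OF dyck_As As_ne]
    by (auto simp: statistics_agree_def initial_zeros_snoc initial_zeros_all_zero asc_count_snoc
        desc_count_snoc valley_count_eq_adj_count DUU_count_eq_adj3_count inner_count_single
        terminal_zeros_snoc trailing_flat_def leading_flat_Cons_nonempty)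
  then show ?thesis using P dyck_path_mountain[OF dyck_As] x0 by (auto simp: mountain_rep_def)
qed

context
  assumes x0: "x \<noteq> 0" and xp: "x \<noteq> last u" and xa: "x \<noteq> asc_count u + 1"
begin

private lemma u_nonzero: "\<exists>y\<in>set u. y \<noteq> 0"
proof (rule ccontr)
  assume "\<not> (\<exists>y\<in>set u. y \<noteq> 0)"
  then have "asc_count u = 0" using asc_count_all_zero by auto
  then show False using x_le x0 xa by simp
qed

private lemma agree: "statistics_agree u As"
  using agree_rep[OF u_nonzero] .

private lemma Max_le_x: "Max (set u) \<le> x"
  using avoids_021_snocD(2)[OF av x0] u_ne by simp

private lemma x_le_asc: "x \<le> asc_count u"
  using x_le xa by simp

private lemma last_nonzero_Max: "last u \<noteq> 0 \<Longrightarrow> Max (set u) = last u"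
  using avoids_021_le_last[OF avoids_021_snocD(1)[OF av] u_ne] last_le_Max u_ne
  by (simp add: antisym)

private lemma last_less_x: "last u < x"
  using last_nonzero_Max Max_le_x xp x0 by (cases "last u = 0") auto

text \<open>Case 4 looks \<open>x\<close> up in the range \<open>A\<^sub>i\<close>, whose first entry is \<open>first_value\<close>.\<close>

private definition first_value :: nat where
  "first_value = (if last u = 0 then Max (set u) else Suc (Max (set u)))"

private lemma first_value_le_x: "first_value \<le> x"
  using Max_le_x last_nonzero_Max last_less_x by (auto simp: first_value_def)

private lemma index_less_card: "x - first_value < card (inner_idx As)"
  using agree x_le_asc Max_le_x last_less_x last_nonzero_Max
  by (auto simp: statistics_agree_def first_value_def inner_count_eq_card[symmetric])

private lemma reroute:
  obtains i where "i \<in> inner_idx As" "inner_count (drop (Suc i) As) = x - first_value"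
    "Phi (u @ [x]) = mountain (drop (leading_flat As) (take i As) @ [As ! i]
       @ replicate (leading_flat As) [] @ [mountain (drop (Suc i) As)])"
proof -
  have ex: "\<exists>A\<in>set As. A \<noteq> []" using agree by (simp add: statistics_agree_def)
  obtain i where iS: "i \<in> inner_idx As" and kd: "key_downs (mountain As) ! (x - first_value) = arch_down As i"
    and cnt: "card {i'\<in>inner_idx As. i < i'} = x - first_value"
    using key_downs_mountain_nth[OF dyck_As As_ne index_less_card] .
  have i: "i < length As" and nei: "As ! i \<noteq> []" using iS by (auto simp: inner_idx_def)
  have j: "(THE j. j < length (if last u = 0 then [Max (set u)..<Suc (asc_count u)]
                                 else [Suc (Max (set u))..<Suc (asc_count u)])
             \<and> (if last u = 0 then [Max (set u)..<Suc (asc_count u)]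
                 else [Suc (Max (set u))..<Suc (asc_count u)]) ! j = x) = x - first_value"
  proof (cases "last u = 0")
    case True
    then show ?thesis
      using The_nth_upt[of "Max (set u)" x "Suc (asc_count u)"] Max_le_x x_le_asc
      by (simp add: first_value_def del: upt_Suc)
  next
    case False
    then show ?thesis
      using The_nth_upt[of "Suc (Max (set u))" x "Suc (asc_count u)"] first_value_le_x x_le_asc
      by (simp add: first_value_def del: upt_Suc)
  qed
  have cases: "(x = 0) = False" "(x = last u) = False" "(x = asc_count u + 1) = False"
    using x0 xp xa by auto
  have e: "nat (elevation (mountain As)) = leading_flat As"
    using elevation_mountain[OF dyck_As ex] by simp
  have "Phi (u @ [x]) = mountain (drop (leading_flat As) (take i As) @ [As ! i]
       @ replicate (leading_flat As) [] @ [mountain (drop (Suc i) As)])"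
    unfolding Phi_snoc_rep phi_step_snoc[OF u_ne] Let_def
      phi_reroute_mountain[OF split_at_nonempty[OF i nei], symmetric]
    by (simp only: cases if_False j e kd match_up_arch_down[OF dyck_As i])
  then show ?thesis using that iS cnt inner_count_drop[of i As] by simp
qed

private lemma statistics_agree_reroute:
  assumes As: "As = replicate e [] @ pre @ A # post" and e: "e = leading_flat As"
    and A: "A \<noteq> []" and post: "post \<noteq> []" and dpost: "dyck_paths post"
    and post_count: "inner_count post = x - first_value"
  shows "statistics_agree (u @ [x]) (pre @ [A] @ replicate e [] @ [mountain post])"
  unfolding statistics_agree_def
proof (intro conjI)
  let ?As' = "pre @ [A] @ replicate e [] @ [mountain post]"
  show "\<exists>B\<in>set ?As'. B \<noteq> []" using A by simp
  show "initial_zeros (u @ [x]) = first_inner_descent ?As'"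
    using agree u_nonzero first_inner_descent_reroute[OF A post, where e=e and pre=pre]
    by (auto simp: statistics_agree_def initial_zeros_snoc As[symmetric])
  show "asc_count (u @ [x]) = valley_sum ?As'"
    using agree last_less_x u_ne valley_sum_reroute[OF A post dpost, where e=e and pre=pre]
    by (simp add: statistics_agree_def asc_count_snoc As[symmetric])
  show "desc_count (u @ [x]) = DUU_sum ?As' + inner_count ?As'"
    using agree last_less_x DUU_sum_reroute[OF A post dpost, where e=e and pre=pre]
    by (simp add: statistics_agree_def desc_count_snoc As[symmetric])
  have Mx: "Max (set (u @ [x])) = x" using Max_snoc Max_le_x by simp
  then show "Max (set (u @ [x])) \<le> asc_count (u @ [x])"
    using x_le_asc last_less_x u_ne by (simp add: asc_count_snoc)
  show "terminal_zeros (u @ [x]) = trailing_flat ?As'"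
    using x0 trailing_flat_reroute[OF A post, where e=e and pre=pre] by (simp add: terminal_zeros_snoc)
  have "leading_flat (replicate e [] @ pre @ A # post) = e" using As e by simp
  then show "run_before_last_nonzero (u @ [x]) = leading_flat ?As'"
    using run_snoc_new_value[OF x0 xp] leading_flat_reroute[OF A post] by simp
  have "inner_count As = inner_count ?As' + (x - first_value)"
    using inner_count_reroute[OF A post, where e=e and pre=pre] post_count by (simp only: As[symmetric])
  then show "inner_count ?As' + Max (set (u @ [x]))
      = asc_count (u @ [x]) + (if last (u @ [x]) = 0 then 1 else 0)"
    using agree Mx x0 last_less_x u_ne first_value_le_x Max_le_x last_nonzero_Max
    by (auto simp: statistics_agree_def asc_count_snoc first_value_def split: if_splits)
qed

lemma mountain_rep_snoc_reroute: "\<exists>As'. mountain_rep (u @ [x]) As'"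
proof -
  obtain i where iS: "i \<in> inner_idx As" and post_count: "inner_count (drop (Suc i) As) = x - first_value"
    and P: "Phi (u @ [x]) = mountain (drop (leading_flat As) (take i As) @ [As ! i]
       @ replicate (leading_flat As) [] @ [mountain (drop (Suc i) As)])"
    using reroute .
  define e where "e = leading_flat As"
  define pre where "pre = drop e (take i As)"
  define A where "A = As ! i"
  define post where "post = drop (Suc i) As"
  have i: "i < length As" and A: "A \<noteq> []" and post: "post \<noteq> []"
    using iS by (auto simp: inner_idx_def A_def post_def)
  have As: "As = replicate e [] @ pre @ A # post"
    using split_at_nonempty(1)[OF i] A by (simp add: e_def pre_def A_def post_def)
  have dpost: "dyck_paths post" using dyck_As by (auto simp: post_def dest: in_set_dropD)
  have "dyck_paths (pre @ [A] @ replicate e [] @ [mountain post])"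
    using dyck_paths_reroute[OF A post] dyck_As As by metis
  moreover have "statistics_agree (u @ [x]) (pre @ [A] @ replicate e [] @ [mountain post])"
    using statistics_agree_reroute[OF As e_def A post dpost] post_count by (simp add: post_def)
  ultimately have "mountain_rep (u @ [x]) (pre @ [A] @ replicate e [] @ [mountain post])"
    using P x0 by (auto simp: mountain_rep_def pre_def A_def post_def e_def)
  then show ?thesis ..
qed

end

end

lemma mountain_rep_exists: "ascent_seq u \<Longrightarrow> avoids_021 u \<Longrightarrow> \<exists>As. mountain_rep u As"
proof (induction u rule: rev_induct)
  case (snoc x u)
  show ?case
  proof (cases "u = []")
    case True
    then show ?thesis using snoc.prems mountain_rep_singleton by (auto simp: ascent_seq_def)
  next
    case False
    obtain As where rep: "mountain_rep u As"
      using snoc.IH ascent_seq_snocD(1)[OF snoc.prems(1) False] avoids_021_snocD(1)[OF snoc.prems(2)]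
      by blast
    note steps = mountain_rep_snoc_zero[OF rep False snoc.prems]
      mountain_rep_snoc_repeat[OF rep False snoc.prems]
      mountain_rep_snoc_new_ascent[OF rep False snoc.prems]
      mountain_rep_snoc_reroute[OF rep False snoc.prems]
    show ?thesis using steps by blast
  qed
qed (simp add: ascent_seq_def)

theorem mainTheorem2:
  fixes u :: "nat list" and n :: nat
  assumes "n \<ge> 1" and "length u = n" and "ascent_seq u" and "avoids_021 u"
  shows "initial_zeros u = first_descent_len (Phi u)
    \<and> (if (\<forall>x\<in>set u. x = 0) then n - 1 else terminal_zeros u) = last_ascent_len (Phi u) - 1
    \<and> asc_count u = valley_count (Phi u)
    \<and> desc_count u = DUU_count (Phi u)
    \<and> ((\<exists>x\<in>set u. x \<noteq> 0) \<longrightarrow> int (run_before_last_nonzero u) = elevation (Phi u))"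
proof -
  obtain As where rep: "mountain_rep u As"
    using mountain_rep_exists[OF assms(3,4)] by blast
  then have d: "dyck_paths As" and ne: "As \<noteq> []" and Phi: "Phi u = mountain As"
    by (simp_all add: mountain_rep_def)
  note stats = mountain_rep_statistics[OF rep]
    valley_count_mountain[OF d] DUU_count_mountain[OF d ne] last_ascent_len_mountain[OF d ne]
  show ?thesis
  proof (cases "\<forall>x\<in>set u. x = 0")
    case True
    then have "As = replicate n []" using rep assms(2) by (simp add: mountain_rep_def)
    then show ?thesis using True stats by (simp add: Phi)
  next
    case False
    then have agree: "statistics_agree u As" using rep by (simp add: mountain_rep_def)
    then have ex: "\<exists>A\<in>set As. A \<noteq> []" by (simp add: statistics_agree_def)
    then show ?thesis using False agree stats elevation_mountain[OF d ex]
      by (auto simp: Phi statistics_agree_def)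
  qed
qed

end
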